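(* Let $\varepsilon>0$ and $\delta\in(0,1)$ be such that $k=\frac{1}{\varepsilon}\ln\left(\frac{e^{\varepsilon}+2\delta-1}{(e^{\varepsilon}+1)\delta}\right)$ is an integer. Let $X$ be a random variable with the $k$-truncated symmetric geometric distribution with parameter $1-e^{-\varepsilon}$, and let $\pi_{\mathrm{opt}}$ be the optimal partition selection primitive for $(\varepsilon,\delta)$-differential privacy. Then for all $n\in\mathbb{N}$, $\pi_{\mathrm{opt}}(n)=\Pr[n+X\ge k+1]$.
   Context: $\mathbb{N}=\{0,1,2,\dots\}$. For $p\in(0,1)$ and an integer $k\ge1$, the $k$-truncated symmetric geometric distribution with parameter $p$ is the distribution on $\mathbb{Z}$ with $\Pr[X=x]=c\,(1-p)^{|x|}$ for $x\in[-k,k]\cap\mathbb{Z}$ and $0$ otherwise, where $c=\frac{p}{1+(1-p)-2(1-p)^{k+1}}$. A partition selection primitive is a function $\pi:\mathbb{N}\to[0,1]$ with $\pi(0)=0$; it is $(\varepsilon,\delta)$-DP if, letting $\rho_\pi(n)$ be keep with probability $\pi(n)$ and drop otherwise, for all $n,n'\in\mathbb{N}$ with $|n-n'|=1$ and all $S\subseteq\{\mathrm{drop},\mathrm{keep}\}$, $\Pr[\rho_\pi(n)\in S]\le e^{\varepsilon}\Pr[\rho_\pi(n')\in S]+\delta$. The optimal primitive $\pi_{\mathrm{opt}}$ is the $(\varepsilon,\delta)$-DP primitive with $\pi(n)\le\pi_{\mathrm{opt}}(n)$ for every $(\varepsilon,\delta)$-DP primitive $\pi$ and every $n$; equivalently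 $\pi_{\mathrm{opt}}(0)=0$ and $\pi_{\mathrm{opt}}(n+1)=\min\left(e^{\varepsilon}\pi_{\mathrm{opt}}(n)+\delta,\,1-e^{-\varepsilon}(1-\pi_{\mathrm{opt}}(n)-\delta),\,1\right)$. *)

theory Defs
  imports "HOL-Analysis.Analysis"
begin

text \<open>Outcome of the randomized mechanism: True = keep, False = drop.
  The mechanism rho_pi(n) keeps with probability pi n.\<close>
definition rho_prob :: "(nat \<Rightarrow> real) \<Rightarrow> nat \<Rightarrow> bool set \<Rightarrow> real" where
  "rho_prob \<pi> n S = (\<Sum>b\<in>S. if b then \<pi> n else 1 - \<pi> n)"

definition partition_selection_primitive :: "(nat \<Rightarrow> real) \<Rightarrow> bool" where
  "partition_selection_primitive \<pi> \<longleftrightarrow> (\<forall>n. 0 \<le> \<pi> n \<and> \<pi> n \<le> 1) \<and> \<pi> 0 = 0"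

definition dp_primitive :: "real \<Rightarrow> real \<Rightarrow> (nat \<Rightarrow> real) \<Rightarrow> bool" where
  "dp_primitive \<epsilon> \<delta> \<pi> \<longleftrightarrow> partition_selection_primitive \<pi> \<and>
     (\<forall>n n' :: nat. \<forall>S :: bool set. \<bar>int n - int n'\<bar> = 1 \<longrightarrow>
        rho_prob \<pi> n S \<le> exp \<epsilon> * rho_prob \<pi> n' S + \<delta>)"

definition optimal_primitive :: "real \<Rightarrow> real \<Rightarrow> (nat \<Rightarrow> real) \<Rightarrow> bool" where
  "optimal_primitive \<epsilon> \<delta> \<pi>opt \<longleftrightarrow> dp_primitive \<epsilon> \<delta> \<pi>opt \<and>
     (\<forall>\<pi>. dp_primitive \<epsilon> \<delta> \<pi> \<longrightarrow> (\<forall>n. \<pi> n \<le> \<pi>opt n))"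

definition tsg_const :: "real \<Rightarrow> nat \<Rightarrow> real" where
  "tsg_const p k = p / (1 + (1 - p) - 2 * (1 - p) ^ (k + 1))"

definition tsg_pmf :: "real \<Rightarrow> nat \<Rightarrow> int \<Rightarrow> real" where
  "tsg_pmf p k x = (if - int k \<le> x \<and> x \<le> int k then tsg_const p k * (1 - p) ^ nat \<bar>x\<bar> else 0)"

definition tsg_prob :: "real \<Rightarrow> nat \<Rightarrow> int set \<Rightarrow> real" where
  "tsg_prob p k A = (\<Sum>x\<in>{- int k..int k} \<inter> A. tsg_pmf p k x)"

end

theory Submission
  imports Defs
begin

text \<open>
  Write \<open>q = exp (-\<epsilon>)\<close>. The hypothesis on \<open>k\<close> says precisely that \<open>\<delta> = Pr[X = k]\<close>.

  The optimal primitive is obtained by iterating the step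
  \<open>x \<mapsto> min (exp \<epsilon> * x + \<delta>) (min (1 - q * (1 - x - \<delta>)) 1)\<close> from 0: every DP primitive
  stays below the iterates because the step is monotone, and the iterates are DP themselves
  because they increase and stay in \<open>[0, 1]\<close>.

  The tail \<open>g n = Pr[n + X \<ge> k + 1]\<close> grows by \<open>Pr[X = k - n]\<close> from \<open>n\<close> to \<open>n + 1\<close>.
  For \<open>n \<le> k\<close> the atoms grow geometrically by the factor \<open>exp \<epsilon>\<close> and the last one is \<open>\<delta>\<close>,
  so \<open>g (n + 1) = exp \<epsilon> * g n + \<delta>\<close>; for \<open>k \<le> n \<le> 2 k\<close> the symmetry of \<open>X\<close> gives the dual
  identity \<open>1 - g n = exp \<epsilon> * (1 - g (n + 1)) + \<delta>\<close>; beyond \<open>2 k\<close> the tail is 1. Since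
  \<open>(exp \<epsilon> + 1) * g k + \<delta> = 1\<close> and \<open>g (2 k) + \<delta> = 1\<close>, these regimes are exactly those in which
  the corresponding branch of the minimum is active, so \<open>g\<close> follows the recursion of the optimal
  primitive.
\<close>

lemma rho_prob_eq:
  "rho_prob \<pi> n S = (if True \<in> S then \<pi> n else 0) + (if False \<in> S then 1 - \<pi> n else 0)"
proof -
  have "rho_prob \<pi> n S = (\<Sum>b\<in>UNIV. if b \<in> S then (if b then \<pi> n else 1 - \<pi> n) else 0)"
    unfolding rho_prob_def by (simp flip: sum.inter_restrict)
  then show ?thesis by (simp add: UNIV_bool)
qed

lemma rho_prob_bound_iff:
  assumes "0 \<le> \<delta>" "1 \<le> E"
  shows "(\<forall>S. rho_prob \<pi> n S \<le> E * rho_prob \<pi> n' S + \<delta>) \<longleftrightarrow>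
    \<pi> n \<le> E * \<pi> n' + \<delta> \<and> 1 - \<pi> n \<le> E * (1 - \<pi> n') + \<delta>"
proof
  assume "\<forall>S. rho_prob \<pi> n S \<le> E * rho_prob \<pi> n' S + \<delta>"
  from this[rule_format, of "{True}"] this[rule_format, of "{False}"]
  show "\<pi> n \<le> E * \<pi> n' + \<delta> \<and> 1 - \<pi> n \<le> E * (1 - \<pi> n') + \<delta>"
    by (simp add: rho_prob_eq)
next
  assume "\<pi> n \<le> E * \<pi> n' + \<delta> \<and> 1 - \<pi> n \<le> E * (1 - \<pi> n') + \<delta>"
  with assms show "\<forall>S. rho_prob \<pi> n S \<le> E * rho_prob \<pi> n' S + \<delta>"
    by (auto simp: rho_prob_eq algebra_simps)
qed

lemma dp_primitive_iff:
  assumes "0 \<le> \<epsilon>" "0 \<le> \<delta>"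
  shows "dp_primitive \<epsilon> \<delta> \<pi> \<longleftrightarrow> partition_selection_primitive \<pi> \<and>
    (\<forall>n. \<pi> (Suc n) \<le> exp \<epsilon> * \<pi> n + \<delta> \<and> 1 - \<pi> n \<le> exp \<epsilon> * (1 - \<pi> (Suc n)) + \<delta> \<and>
         \<pi> n \<le> exp \<epsilon> * \<pi> (Suc n) + \<delta> \<and> 1 - \<pi> (Suc n) \<le> exp \<epsilon> * (1 - \<pi> n) + \<delta>)"
proof -
  have neighbours: "\<bar>int n - int n'\<bar> = 1 \<longleftrightarrow> n = Suc n' \<or> n' = Suc n" for n n' :: nat
    by linarith
  have "(\<forall>n n' S. \<bar>int n - int n'\<bar> = 1 \<longrightarrow> rho_prob \<pi> n S \<le> exp \<epsilon> * rho_prob \<pi> n' S + \<delta>) \<longleftrightarrow>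
      (\<forall>n. (\<forall>S. rho_prob \<pi> (Suc n) S \<le> exp \<epsilon> * rho_prob \<pi> n S + \<delta>) \<and>
           (\<forall>S. rho_prob \<pi> n S \<le> exp \<epsilon> * rho_prob \<pi> (Suc n) S + \<delta>))"
    unfolding neighbours by blast
  then show ?thesis
    unfolding dp_primitive_def using assms by (simp add: rho_prob_bound_iff) blast
qed

definition opt_step :: "real \<Rightarrow> real \<Rightarrow> real \<Rightarrow> real" where
  "opt_step \<epsilon> \<delta> x = min (exp \<epsilon> * x + \<delta>) (min (1 - exp (- \<epsilon>) * (1 - x - \<delta>)) 1)"

primrec opt_primitive :: "real \<Rightarrow> real \<Rightarrow> nat \<Rightarrow> real" where
  "opt_primitive \<epsilon> \<delta> 0 = 0"
| "opt_primitive \<epsilon> \<delta> (Suc n) = opt_step \<epsilon> \<delta> (opt_primitive \<epsilon> \<delta> n)"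

lemma dual_dp_bound_iff:
  "(y::real) \<le> 1 - exp (- \<epsilon>) * (1 - x - \<delta>) \<longleftrightarrow> 1 - x \<le> exp \<epsilon> * (1 - y) + \<delta>"
proof -
  have "1 - exp (- \<epsilon>) * (1 - x - \<delta>) = (exp \<epsilon> - (1 - x - \<delta>)) / exp \<epsilon>"
    by (simp add: exp_minus field_simps)
  then show ?thesis by (simp add: le_divide_eq algebra_simps)
qed

lemma opt_step_mono: "x \<le> y \<Longrightarrow> opt_step \<epsilon> \<delta> x \<le> opt_step \<epsilon> \<delta> y"
  unfolding opt_step_def by (intro min.mono) (auto intro: mult_left_mono)

lemma opt_step_bounds:
  assumes "0 \<le> \<epsilon>" "0 \<le> \<delta>" "0 \<le> x" "x \<le> 1"
  shows "x \<le> opt_step \<epsilon> \<delta> x" "opt_step \<epsilon> \<delta> x \<le> 1"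
proof -
  have "x \<le> exp \<epsilon> * x" using assms by (simp add: mult_le_cancel_right1)
  moreover have "exp (- \<epsilon>) * (1 - x - \<delta>) \<le> 1 - x"
  proof -
    have "exp (- \<epsilon>) * (1 - x - \<delta>) \<le> exp (- \<epsilon>) * (1 - x)"
      using assms by (intro mult_left_mono) auto
    also have "\<dots> \<le> 1 - x" using assms by (intro mult_left_le_one_le) auto
    finally show ?thesis .
  qed
  ultimately show "x \<le> opt_step \<epsilon> \<delta> x" using assms unfolding opt_step_def by simp
  show "opt_step \<epsilon> \<delta> x \<le> 1" unfolding opt_step_def by simp
qed

lemma opt_primitive_bounds:
  assumes "0 \<le> \<epsilon>" "0 \<le> \<delta>"
  shows "0 \<le> opt_primitive \<epsilon> \<delta> n \<and> opt_primitive \<epsilon> \<delta> n \<le> 1"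
proof (induction n)
  case 0
  then show ?case by simp
next
  case (Suc n)
  then have "opt_primitive \<epsilon> \<delta> n \<le> opt_primitive \<epsilon> \<delta> (Suc n)" "opt_primitive \<epsilon> \<delta> (Suc n) \<le> 1"
    using opt_step_bounds[OF assms] by simp_all
  with Suc show ?case by linarith
qed

lemma dp_primitive_le_opt_step:
  assumes "0 \<le> \<epsilon>" "0 \<le> \<delta>" "dp_primitive \<epsilon> \<delta> \<pi>"
  shows "\<pi> (Suc n) \<le> opt_step \<epsilon> \<delta> (\<pi> n)"
proof -
  have "\<pi> (Suc n) \<le> exp \<epsilon> * \<pi> n + \<delta>"
    and "1 - \<pi> n \<le> exp \<epsilon> * (1 - \<pi> (Suc n)) + \<delta>"
    and "\<pi> (Suc n) \<le> 1"
    using assms by (simp_all add: dp_primitive_iff partition_selection_primitive_def)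
  then show ?thesis unfolding opt_step_def by (simp add: dual_dp_bound_iff)
qed

lemma dp_primitive_opt_primitive:
  assumes "0 \<le> \<epsilon>" "0 \<le> \<delta>"
  shows "dp_primitive \<epsilon> \<delta> (opt_primitive \<epsilon> \<delta>)"
  unfolding dp_primitive_iff[OF assms]
proof (intro conjI allI)
  let ?\<pi> = "opt_primitive \<epsilon> \<delta>"
  show "partition_selection_primitive ?\<pi>"
    using opt_primitive_bounds[OF assms] by (simp add: partition_selection_primitive_def)
  fix n
  have bounds: "0 \<le> ?\<pi> n" "?\<pi> n \<le> ?\<pi> (Suc n)" "?\<pi> (Suc n) \<le> 1"
    using opt_primitive_bounds[OF assms, of n] opt_step_bounds[OF assms] by auto
  have grow: "y \<le> exp \<epsilon> * y" if "0 \<le> y" for y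
    using assms that by (simp add: mult_le_cancel_right1)
  show "?\<pi> (Suc n) \<le> exp \<epsilon> * ?\<pi> n + \<delta>" by (simp add: opt_step_def)
  show "1 - ?\<pi> n \<le> exp \<epsilon> * (1 - ?\<pi> (Suc n)) + \<delta>"
    by (simp add: opt_step_def flip: dual_dp_bound_iff)
  have "?\<pi> (Suc n) \<le> exp \<epsilon> * ?\<pi> (Suc n)" using bounds by (intro grow) linarith
  then show "?\<pi> n \<le> exp \<epsilon> * ?\<pi> (Suc n) + \<delta>" using bounds assms by linarith
  have "1 - ?\<pi> n \<le> exp \<epsilon> * (1 - ?\<pi> n)" using bounds by (intro grow) linarith
  then show "1 - ?\<pi> (Suc n) \<le> exp \<epsilon> * (1 - ?\<pi> n) + \<delta>" using bounds assms by linarith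
qed

lemma optimal_primitive_iff:
  assumes "0 \<le> \<epsilon>" "0 \<le> \<delta>"
  shows "optimal_primitive \<epsilon> \<delta> \<pi> \<longleftrightarrow> \<pi> = opt_primitive \<epsilon> \<delta>"
proof -
  have dominates: "\<pi> n \<le> opt_primitive \<epsilon> \<delta> n" if "dp_primitive \<epsilon> \<delta> \<pi>" for \<pi> n
  proof (induction n)
    case 0
    then show ?case using that by (simp add: dp_primitive_def partition_selection_primitive_def)
  next
    case (Suc n)
    then show ?case
      using dp_primitive_le_opt_step[OF assms that] opt_step_mono by (fastforce intro: order_trans)
  qed
  show ?thesis
  proof
    assume "optimal_primitive \<epsilon> \<delta> \<pi>"
    then have "dp_primitive \<epsilon> \<delta> \<pi>" "opt_primitive \<epsilon> \<delta> n \<le> \<pi> n" for n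
      using dp_primitive_opt_primitive[OF assms] by (simp_all add: optimal_primitive_def)
    then show "\<pi> = opt_primitive \<epsilon> \<delta>"
      using dominates by (blast intro: ext order_antisym)
  next
    assume "\<pi> = opt_primitive \<epsilon> \<delta>"
    then show "optimal_primitive \<epsilon> \<delta> \<pi>"
      using dp_primitive_opt_primitive[OF assms] dominates by (simp add: optimal_primitive_def)
  qed
qed

lemma opt_step_eq_linear:
  assumes "0 \<le> \<epsilon>" "0 \<le> x" "(exp \<epsilon> + 1) * x + \<delta> \<le> 1"
  shows "opt_step \<epsilon> \<delta> x = exp \<epsilon> * x + \<delta>"
proof -
  have "exp \<epsilon> * (1 - (exp \<epsilon> * x + \<delta>)) + \<delta> - (1 - x) = (exp \<epsilon> - 1) * (1 - (exp \<epsilon> + 1) * x - \<delta>)"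
    by (simp add: algebra_simps)
  also have "\<dots> \<ge> 0" using assms by simp
  finally have "exp \<epsilon> * x + \<delta> \<le> 1 - exp (- \<epsilon>) * (1 - x - \<delta>)"
    by (simp add: dual_dp_bound_iff)
  moreover have "exp \<epsilon> * x + \<delta> \<le> 1" using assms by (simp add: distrib_right)
  ultimately show ?thesis by (simp add: opt_step_def)
qed

lemma opt_step_eq_dual:
  assumes "0 \<le> \<epsilon>" "1 \<le> (exp \<epsilon> + 1) * x + \<delta>" "x + \<delta> \<le> 1"
  shows "opt_step \<epsilon> \<delta> x = 1 - exp (- \<epsilon>) * (1 - x - \<delta>)"
proof -
  let ?y = "1 - exp (- \<epsilon>) * (1 - x - \<delta>)"
  have "exp \<epsilon> * ?y = exp \<epsilon> - (1 - x - \<delta>)"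
    by (simp add: right_diff_distrib mult.assoc[symmetric] exp_minus_inverse)
  then have "exp \<epsilon> * (exp \<epsilon> * x + \<delta>) - exp \<epsilon> * ?y = (exp \<epsilon> - 1) * ((exp \<epsilon> + 1) * x + \<delta> - 1)"
    by (simp add: algebra_simps)
  also have "\<dots> \<ge> 0" using assms by simp
  finally have "?y \<le> exp \<epsilon> * x + \<delta>" by simp
  moreover have "?y \<le> 1" using assms by simp
  ultimately show ?thesis by (simp add: opt_step_def)
qed

lemma opt_step_eq_one:
  assumes "0 \<le> \<epsilon>" "0 \<le> x" "1 \<le> x + \<delta>"
  shows "opt_step \<epsilon> \<delta> x = 1"
proof -
  have "x \<le> exp \<epsilon> * x" using assms by (simp add: mult_le_cancel_right1)
  moreover have "0 \<le> exp (- \<epsilon>) * (x + \<delta> - 1)" using assms by simp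
  ultimately show ?thesis using assms by (simp add: opt_step_def algebra_simps)
qed

definition tsg_primitive :: "real \<Rightarrow> nat \<Rightarrow> nat \<Rightarrow> real" where
  "tsg_primitive p k n = tsg_prob p k {x. int k + 1 \<le> int n + x}"

lemma tsg_prob_insert:
  "a \<notin> A \<Longrightarrow> tsg_prob p k (insert a A) = tsg_prob p k A + tsg_pmf p k a"
  by (cases "a \<in> {- int k..int k}") (auto simp: tsg_prob_def tsg_pmf_def Int_insert_right)

lemma tsg_primitive_0: "tsg_primitive p k 0 = 0"
  by (auto simp: tsg_primitive_def tsg_prob_def intro: sum.neutral)

lemma tsg_primitive_Suc:
  "tsg_primitive p k (Suc n) = tsg_primitive p k n + tsg_pmf p k (int k - int n)"
proof -
  have "{x. int k + 1 \<le> int (Suc n) + x} = insert (int k - int n) {x. int k + 1 \<le> int n + x}"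
    by auto
  then show ?thesis by (simp add: tsg_primitive_def tsg_prob_insert)
qed

context
  fixes p :: real and k :: nat
  assumes p: "0 < p" "p \<le> 1"
begin

lemma tsg_normalizer_pos: "0 < 1 + (1 - p) - 2 * (1 - p) ^ (k + 1)"
proof -
  have "(1 - p) ^ (k + 1) \<le> 1 - p" using power_decreasing[of 1 "k + 1" "1 - p"] p by simp
  then show ?thesis using p by linarith
qed

text \<open>The two summands are the closed forms of \<open>Pr[X \<ge> 0]\<close> and \<open>Pr[X \<ge> 1]\<close>, which add up
  to 1 by the symmetry of \<open>X\<close>.\<close>
lemma tsg_const_normalization:
  "tsg_const p k / p * ((1 - (1 - p) ^ (k + 1)) + ((1 - p) - (1 - p) ^ (k + 1))) = 1"
  using tsg_normalizer_pos p by (simp add: tsg_const_def)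

lemma tsg_const_nonneg: "0 \<le> tsg_const p k"
  using tsg_normalizer_pos p by (simp add: tsg_const_def)

lemma mono_tsg_primitive: "mono (tsg_primitive p k)"
proof (rule incseq_SucI)
  fix n
  have "0 \<le> tsg_pmf p k (int k - int n)"
    using tsg_const_nonneg p by (simp add: tsg_pmf_def)
  then show "tsg_primitive p k n \<le> tsg_primitive p k (Suc n)" by (simp add: tsg_primitive_Suc)
qed

lemma tsg_const_mult_power_telescope:
  "tsg_const p k * (1 - p) ^ j = tsg_const p k / p * ((1 - p) ^ j - (1 - p) ^ Suc j)"
  using p by (simp add: field_simps)

lemma tsg_primitive_lower:
  assumes "n \<le> k + 1"
  shows "tsg_primitive p k n = tsg_const p k / p * ((1 - p) ^ (k + 1 - n) - (1 - p) ^ (k + 1))"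
  using assms
proof (induction n)
  case 0
  then show ?case by (simp add: tsg_primitive_0)
next
  case (Suc n)
  define j where "j = k - n"
  have j: "k + 1 - n = Suc j" "k + 1 - Suc n = j" using Suc by (simp_all add: j_def)
  have "tsg_primitive p k (Suc n) = tsg_primitive p k n + tsg_const p k * (1 - p) ^ j"
    using Suc by (simp add: tsg_primitive_Suc tsg_pmf_def nat_diff_distrib j_def)
  also have "\<dots> = tsg_const p k / p * ((1 - p) ^ j - (1 - p) ^ (k + 1))"
    using Suc j by (simp only: tsg_const_mult_power_telescope) (simp add: right_diff_distrib)
  finally show ?case using j by simp
qed

lemma tsg_primitive_upper:
  assumes "m \<le> k + 1"
  shows "tsg_primitive p k (k + m) = 1 - tsg_const p k / p * ((1 - p) ^ m - (1 - p) ^ (k + 1))"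
  using assms
proof (induction m)
  case 0
  have "tsg_primitive p k k = tsg_const p k / p * ((1 - p) - (1 - p) ^ (k + 1))"
    using tsg_primitive_lower[of k] by simp
  with tsg_const_normalization show ?case
    by (simp only: distrib_left power_0 add_0_right)
next
  case (Suc m)
  have "tsg_primitive p k (k + Suc m) = tsg_primitive p k (k + m) + tsg_const p k * (1 - p) ^ m"
    using Suc by (simp add: tsg_primitive_Suc tsg_pmf_def)
  then show ?case
    using Suc by (simp only: tsg_const_mult_power_telescope) (simp add: right_diff_distrib)
qed

lemma tsg_primitive_beyond: "2 * k + 1 \<le> n \<Longrightarrow> tsg_primitive p k n = 1"
proof (induction n rule: dec_induct)
  case base
  then show ?case using tsg_primitive_upper[of "k + 1"] by (simp add: mult_2)
next
  case (step n)
  then show ?case by (simp add: tsg_primitive_Suc tsg_pmf_def)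
qed

lemma tsg_pmf_endpoint: "tsg_pmf p k (int k) = tsg_const p k / p * ((1 - p) ^ k - (1 - p) ^ (k + 1))"
  using tsg_const_mult_power_telescope[of k] by (simp add: tsg_pmf_def)

lemma tsg_primitive_lower_step:
  assumes "n \<le> k"
  shows "(1 - p) * (tsg_primitive p k (Suc n) - tsg_pmf p k (int k)) = tsg_primitive p k n"
proof -
  define c where "c = tsg_const p k / p"
  have "k + 1 - n = Suc (k - n)" "k + 1 - Suc n = k - n" using assms by simp_all
  then have lower: "tsg_primitive p k n = c * ((1 - p) ^ Suc (k - n) - (1 - p) ^ (k + 1))"
    and lower_Suc: "tsg_primitive p k (Suc n) = c * ((1 - p) ^ (k - n) - (1 - p) ^ (k + 1))"
    using tsg_primitive_lower[of n, folded c_def] tsg_primitive_lower[of "Suc n", folded c_def] assms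
    by simp_all
  show ?thesis
    unfolding lower lower_Suc tsg_pmf_endpoint[folded c_def] by (simp add: algebra_simps)
qed

lemma tsg_primitive_upper_step:
  assumes "k \<le> n" "n \<le> 2 * k"
  shows "(1 - p) * (1 - tsg_primitive p k n - tsg_pmf p k (int k)) = 1 - tsg_primitive p k (Suc n)"
proof -
  define c where "c = tsg_const p k / p"
  define m where "m = n - k"
  have upper: "tsg_primitive p k n = 1 - c * ((1 - p) ^ m - (1 - p) ^ (k + 1))"
    using tsg_primitive_upper[of m, folded c_def] assms by (simp add: m_def)
  have upper_Suc: "tsg_primitive p k (Suc n) = 1 - c * ((1 - p) ^ Suc m - (1 - p) ^ (k + 1))"
    using tsg_primitive_upper[of "Suc m", folded c_def] assms by (simp add: m_def Suc_diff_le)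
  show ?thesis
    unfolding upper upper_Suc tsg_pmf_endpoint[folded c_def] by (simp add: algebra_simps)
qed

lemma tsg_primitive_middle: "tsg_primitive p k k + tsg_primitive p k (Suc k) = 1"
  using tsg_primitive_lower[of k] tsg_primitive_upper[of 1] by simp

end

lemma tsg_pmf_endpoint_eq:
  assumes "0 < \<epsilon>" "0 < \<delta>"
    and "real k = (1 / \<epsilon>) * ln ((exp \<epsilon> + 2 * \<delta> - 1) / ((exp \<epsilon> + 1) * \<delta>))"
  shows "\<delta> = tsg_pmf (1 - exp (- \<epsilon>)) k (int k)"
proof -
  define E where "E = exp \<epsilon>"
  define q where "q = exp (- \<epsilon>)"
  have E: "1 < E" and q: "0 < q" "q < 1" and Eq: "E * q = 1"
    using assms(1) by (simp_all add: E_def q_def exp_minus_inverse)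
  have den: "0 < (E + 1) * \<delta>" using E assms(2) by simp
  have ratio: "0 < (E + 2 * \<delta> - 1) / ((E + 1) * \<delta>)"
    using E assms(2) den by (simp add: zero_less_divide_iff)
  have "E ^ k = exp (real k * \<epsilon>)" by (simp add: E_def exp_of_nat_mult)
  also have "\<dots> = (E + 2 * \<delta> - 1) / ((E + 1) * \<delta>)"
    using assms ratio by (simp add: E_def)
  finally have "E ^ k * ((E + 1) * \<delta>) = E + 2 * \<delta> - 1"
    using E assms(2) by (simp add: eq_divide_eq)
  moreover have "q ^ k * E ^ k = 1" using Eq by (metis power_mult_distrib mult.commute power_one)
  ultimately have balance: "\<delta> * (E + 1) = q ^ k * (E + 2 * \<delta> - 1)"
    by (metis mult.assoc mult.commute mult_1)
  have "E * (\<delta> * (1 + q - 2 * q ^ (k + 1))) = \<delta> * (E + E * q) - 2 * \<delta> * (E * q) * q ^ k"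
    by (simp add: algebra_simps)
  also have "\<dots> = \<delta> * (E + 1) - 2 * \<delta> * q ^ k" using Eq by simp
  also have "\<dots> = q ^ k * (E - 1)" using balance by (simp add: algebra_simps)
  also have "\<dots> = E * ((1 - q) * q ^ k)" using Eq by (simp add: algebra_simps)
  finally have "\<delta> * (1 + q - 2 * q ^ (k + 1)) = (1 - q) * q ^ k" using E by simp
  moreover have "0 < 1 + q - 2 * q ^ (k + 1)"
    using tsg_normalizer_pos[of "1 - q" k] q by simp
  ultimately show ?thesis
    by (simp add: tsg_pmf_def tsg_const_def q_def[symmetric] field_simps)
qed

context
  fixes \<epsilon> \<delta> :: real and k :: nat
  assumes \<epsilon>: "0 < \<epsilon>" and \<delta>: "\<delta> = tsg_pmf (1 - exp (- \<epsilon>)) k (int k)"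
begin

lemma tsg_parameter_bounds: "0 < 1 - exp (- \<epsilon>)" "1 - exp (- \<epsilon>) \<le> 1"
  using \<epsilon> by simp_all

lemma tsg_primitive_Suc_lower:
  assumes "n \<le> k"
  shows "tsg_primitive (1 - exp (- \<epsilon>)) k (Suc n) = exp \<epsilon> * tsg_primitive (1 - exp (- \<epsilon>)) k n + \<delta>"
proof -
  let ?g = "tsg_primitive (1 - exp (- \<epsilon>)) k"
  have "exp (- \<epsilon>) * (?g (Suc n) - \<delta>) = ?g n"
    using tsg_primitive_lower_step[OF tsg_parameter_bounds assms] \<delta> by simp
  then have "exp \<epsilon> * (exp (- \<epsilon>) * (?g (Suc n) - \<delta>)) = exp \<epsilon> * ?g n" by simp
  then have "?g (Suc n) - \<delta> = exp \<epsilon> * ?g n" by (simp add: mult.assoc[symmetric] exp_minus_inverse)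
  then show ?thesis by simp
qed

lemma tsg_primitive_Suc_upper:
  assumes "k \<le> n" "n \<le> 2 * k"
  shows "tsg_primitive (1 - exp (- \<epsilon>)) k (Suc n) =
    1 - exp (- \<epsilon>) * (1 - tsg_primitive (1 - exp (- \<epsilon>)) k n - \<delta>)"
  using tsg_primitive_upper_step[OF tsg_parameter_bounds assms] \<delta> by simp

lemma tsg_threshold_lower: "(exp \<epsilon> + 1) * tsg_primitive (1 - exp (- \<epsilon>)) k k + \<delta> = 1"
  using tsg_primitive_Suc_lower[of k] tsg_primitive_middle[OF tsg_parameter_bounds, of k]
  by (simp add: distrib_right)

lemma tsg_threshold_upper: "tsg_primitive (1 - exp (- \<epsilon>)) k (2 * k) + \<delta> = 1"
  using tsg_primitive_Suc_upper[of "2 * k"] tsg_primitive_beyond[OF tsg_parameter_bounds, of k "Suc (2 * k)"]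
  by simp

lemma tsg_delta_nonneg: "0 \<le> \<delta>"
  using \<delta> tsg_const_nonneg[OF tsg_parameter_bounds] \<epsilon> by (simp add: tsg_pmf_def)

lemma tsg_primitive_Suc_eq_opt_step:
  "tsg_primitive (1 - exp (- \<epsilon>)) k (Suc n) = opt_step \<epsilon> \<delta> (tsg_primitive (1 - exp (- \<epsilon>)) k n)"
proof -
  let ?g = "tsg_primitive (1 - exp (- \<epsilon>)) k"
  have mono: "mono ?g" by (rule mono_tsg_primitive[OF tsg_parameter_bounds])
  have nonneg: "0 \<le> ?g n" using monoD[OF mono, of 0 n] by (simp add: tsg_primitive_0)
  consider "n \<le> k" | "k \<le> n" "n \<le> 2 * k" | "2 * k + 1 \<le> n" by linarith
  then show ?thesis
  proof cases
    case 1
    have "(exp \<epsilon> + 1) * ?g n \<le> (exp \<epsilon> + 1) * ?g k"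
      using monoD[OF mono 1] by (simp add: add_pos_pos less_imp_le)
    then have "(exp \<epsilon> + 1) * ?g n + \<delta> \<le> 1" using tsg_threshold_lower by linarith
    then show ?thesis
      using opt_step_eq_linear[of \<epsilon> "?g n" \<delta>] nonneg \<epsilon> tsg_primitive_Suc_lower[OF 1] by simp
  next
    case 2
    have "(exp \<epsilon> + 1) * ?g k \<le> (exp \<epsilon> + 1) * ?g n"
      using monoD[OF mono 2(1)] by (simp add: add_pos_pos less_imp_le)
    then have "1 \<le> (exp \<epsilon> + 1) * ?g n + \<delta>" using tsg_threshold_lower by linarith
    moreover have "?g n + \<delta> \<le> 1" using monoD[OF mono 2(2)] tsg_threshold_upper by linarith
    ultimately show ?thesis
      using opt_step_eq_dual[of \<epsilon> "?g n" \<delta>] \<epsilon> tsg_primitive_Suc_upper[OF 2] by simp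
  next
    case 3
    then have "?g n = 1" "?g (Suc n) = 1"
      using tsg_primitive_beyond[OF tsg_parameter_bounds] by simp_all
    then show ?thesis using opt_step_eq_one[of \<epsilon> "?g n" \<delta>] \<epsilon> tsg_delta_nonneg by simp
  qed
qed

lemma tsg_primitive_eq_opt_primitive: "tsg_primitive (1 - exp (- \<epsilon>)) k = opt_primitive \<epsilon> \<delta>"
proof
  fix n
  show "tsg_primitive (1 - exp (- \<epsilon>)) k n = opt_primitive \<epsilon> \<delta> n"
    by (induction n) (simp_all add: tsg_primitive_0 tsg_primitive_Suc_eq_opt_step)
qed

end

theorem theorem5:
  fixes \<epsilon> \<delta> :: real and k :: nat and \<pi>opt :: "nat \<Rightarrow> real"
  assumes "\<epsilon> > 0" and "0 < \<delta>" and "\<delta> < 1"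
    and "real k = (1 / \<epsilon>) * ln ((exp \<epsilon> + 2 * \<delta> - 1) / ((exp \<epsilon> + 1) * \<delta>))"
    and "optimal_primitive \<epsilon> \<delta> \<pi>opt"
  shows "\<forall>n::nat. \<pi>opt n = tsg_prob (1 - exp (- \<epsilon>)) k {x. int n + x \<ge> int k + 1}"
proof -
  \<comment> \<open>\<open>\<delta> < 1\<close> only rules out \<open>k = 0\<close>, which the argument covers as well.\<close>
  have \<delta>: "\<delta> = tsg_pmf (1 - exp (- \<epsilon>)) k (int k)"
    using assms(1,2,4) by (rule tsg_pmf_endpoint_eq)
  have "\<pi>opt = opt_primitive \<epsilon> \<delta>"
    using assms(1,2,5) optimal_primitive_iff by simp
  also have "\<dots> = tsg_primitive (1 - exp (- \<epsilon>)) k"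
    using tsg_primitive_eq_opt_primitive[OF assms(1) \<delta>] by simp
  finally show ?thesis by (simp add: tsg_primitive_def add.commute)
qed

end
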